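(* Let $n\ge 1$, let $\rho$ be an $n\times n$ correlation matrix, let $u=(u_1,\ldots,u_n)\in\mathbb{R}^n$ be arbitrary and let $\kappa\in\{0,1\}$. Define the $n\times n$ matrix $\hat\rho$ by \[ \hat{\rho}_{ij} = \begin{cases} \dfrac{\rho_{ij}+\kappa u_iu_j}{\sqrt{(1+u_i^2)(1+u_j^2)}}, & i\neq j,\\[2mm] 1, & i=j. \end{cases} \] Then $\hat\rho$ is a correlation matrix.
   Context: An $n\times n$ real matrix $C$ is called a correlation matrix if (i) $C$ is positive semi-definite, i.e. $v^T C v\ge 0$ for all $v\in\mathbb{R}^n$, and (ii) all diagonal entries equal one, $C_{ii}=1$ for $i=1,\ldots,n$. *)

theory Defs
  imports "HOL-Analysis.Analysis"
begin

definition correlation_matrix :: "real^'n^'n \<Rightarrow> bool" where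
  "correlation_matrix C \<longleftrightarrow>
     (\<forall>v :: real^'n. v \<bullet> (C *v v) \<ge> 0) \<and> (\<forall>i. C $ i $ i = 1)"

end

theory Submission
  imports Defs
begin

text \<open>Put \<open>A = \<rho> + \<kappa> u u\<^sup>T + (1 - \<kappa>) diag(u\<^sub>i\<^sup>2)\<close>. For \<open>0 \<le> \<kappa> \<le> 1\<close> (all that is used
  of \<open>\<kappa> \<in> {0, 1}\<close>) this is a nonnegative combination of positive semidefinite matrices,
  with diagonal \<open>1 + u\<^sub>i\<^sup>2 > 0\<close> and off-diagonal entries \<open>\<rho>\<^sub>i\<^sub>j + \<kappa> u\<^sub>i u\<^sub>j\<close>. The matrix of
  the theorem is the normalisation \<open>A\<^sub>i\<^sub>j / sqrt (A\<^sub>i\<^sub>i A\<^sub>j\<^sub>j)\<close>, a diagonal congruence of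
  \<open>A\<close>, hence positive semidefinite with unit diagonal.\<close>

definition psd_matrix :: "real^'n^'n \<Rightarrow> bool" where
  "psd_matrix A \<longleftrightarrow> (\<forall>v. v \<bullet> (A *v v) \<ge> 0)"

lemma quadratic_form_eq_double_sum:
  fixes A :: "real^'n^'n"
  shows "v \<bullet> (A *v v) = (\<Sum>i\<in>UNIV. \<Sum>j\<in>UNIV. v $ i * A $ i $ j * v $ j)"
  by (simp add: inner_vec_def matrix_vector_mult_def sum_distrib_left mult.assoc)

lemma psd_matrix_add: "psd_matrix A \<Longrightarrow> psd_matrix B \<Longrightarrow> psd_matrix (A + B)"
  by (simp add: psd_matrix_def matrix_vector_mult_add_rdistrib inner_add_right add_nonneg_nonneg)

lemma psd_matrix_scaleR: "0 \<le> c \<Longrightarrow> psd_matrix A \<Longrightarrow> psd_matrix (c *\<^sub>R A)"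
  by (simp add: psd_matrix_def scaleR_matrix_vector_assoc[symmetric])

lemma psd_matrix_outer_product:
  fixes u :: "real^'n"
  shows "psd_matrix (\<chi> i j. u $ i * u $ j)"
  unfolding psd_matrix_def quadratic_form_eq_double_sum
proof
  fix v :: "real^'n"
  have "(\<Sum>i\<in>UNIV. \<Sum>j\<in>UNIV. v $ i * (\<chi> i j. u $ i * u $ j) $ i $ j * v $ j)
      = (\<Sum>i\<in>UNIV. v $ i * u $ i)^2"
    by (simp add: power2_eq_square sum_product ac_simps)
  then show "0 \<le> (\<Sum>i\<in>UNIV. \<Sum>j\<in>UNIV. v $ i * (\<chi> i j. u $ i * u $ j) $ i $ j * v $ j)"
    by simp
qed

lemma psd_matrix_diagonal:
  fixes d :: "'n::finite \<Rightarrow> real"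
  assumes "\<And>i. 0 \<le> d i"
  shows "psd_matrix (\<chi> i j. if i = j then d i else 0)"
  unfolding psd_matrix_def
proof
  fix v :: "real^'n"
  have "v \<bullet> ((\<chi> i j. if i = j then d i else 0) *v v) = (\<Sum>i\<in>UNIV. d i * (v $ i)^2)"
    unfolding quadratic_form_eq_double_sum
    by (simp add: if_distrib if_distribR sum.delta power2_eq_square ac_simps cong: if_cong)
  then show "0 \<le> v \<bullet> ((\<chi> i j. if i = j then d i else 0) *v v)"
    using assms by (simp add: sum_nonneg)
qed

lemma psd_matrix_diagonal_congruence:
  fixes A :: "real^'n^'n" and s :: "'n \<Rightarrow> real"
  assumes "psd_matrix A"
  shows "psd_matrix (\<chi> i j. s i * A $ i $ j * s j)"
  unfolding psd_matrix_def
proof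
  fix v :: "real^'n"
  have "v \<bullet> ((\<chi> i j. s i * A $ i $ j * s j) *v v) = (\<chi> i. s i * v $ i) \<bullet> (A *v (\<chi> i. s i * v $ i))"
    unfolding quadratic_form_eq_double_sum by (simp add: ac_simps)
  then show "0 \<le> v \<bullet> ((\<chi> i j. s i * A $ i $ j * s j) *v v)"
    using assms by (simp add: psd_matrix_def)
qed

lemma correlation_matrix_normalize:
  assumes "psd_matrix A" and "\<And>i. A $ i $ i > 0"
  shows "correlation_matrix (\<chi> i j. A $ i $ j / sqrt (A $ i $ i * A $ j $ j))"
proof -
  define s where "s i = 1 / sqrt (A $ i $ i)" for i
  have "(\<chi> i j. A $ i $ j / sqrt (A $ i $ i * A $ j $ j)) = (\<chi> i j. s i * A $ i $ j * s j)"
    by (simp add: s_def real_sqrt_mult vec_eq_iff)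
  then have "psd_matrix (\<chi> i j. A $ i $ j / sqrt (A $ i $ i * A $ j $ j))"
    using psd_matrix_diagonal_congruence[OF assms(1), of s] by (simp only:)
  moreover have "A $ i $ i / sqrt (A $ i $ i * A $ i $ i) = 1" for i
    using assms(2)[of i] by simp
  ultimately show ?thesis
    by (simp add: correlation_matrix_def psd_matrix_def)
qed

theorem lemma1:
  fixes \<rho> :: "real^'n^'n" and u :: "real^'n" and \<kappa> :: real
  assumes "correlation_matrix \<rho>"
    and "\<kappa> \<in> {0, 1}"
  shows "correlation_matrix (\<chi> i j. if i = j then 1
            else (\<rho> $ i $ j + \<kappa> * u $ i * u $ j) / sqrt ((1 + (u $ i)^2) * (1 + (u $ j)^2)))"
proof -
  define A where "A = \<rho> + \<kappa> *\<^sub>R (\<chi> i j. u $ i * u $ j)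
    + (1 - \<kappa>) *\<^sub>R (\<chi> i j. if i = j then (u $ i)^2 else 0)"
  have \<kappa>: "0 \<le> \<kappa>" "0 \<le> 1 - \<kappa>" using assms(2) by auto
  have \<rho>_diag: "\<rho> $ i $ i = 1" for i
    using assms(1) by (simp add: correlation_matrix_def)
  have "psd_matrix A"
    unfolding A_def using assms(1) \<kappa>
    by (intro psd_matrix_add psd_matrix_scaleR psd_matrix_outer_product psd_matrix_diagonal)
      (auto simp: correlation_matrix_def psd_matrix_def)
  moreover have A_diag: "A $ i $ i = 1 + (u $ i)^2" for i
    by (simp add: A_def \<rho>_diag power2_eq_square algebra_simps)
  moreover have "A $ i $ i > 0" for i
    unfolding A_diag by (intro add_pos_nonneg) auto
  moreover have "A $ i $ j = \<rho> $ i $ j + \<kappa> * u $ i * u $ j" if "i \<noteq> j" for i j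
    using that by (simp add: A_def)
  ultimately have "(\<chi> i j. if i = j then 1
          else (\<rho> $ i $ j + \<kappa> * u $ i * u $ j) / sqrt ((1 + (u $ i)^2) * (1 + (u $ j)^2)))
      = (\<chi> i j. A $ i $ j / sqrt (A $ i $ i * A $ j $ j))"
    by (auto simp: vec_eq_iff) (metis less_irrefl)
  also have "correlation_matrix \<dots>"
    using \<open>psd_matrix A\<close> \<open>\<And>i. A $ i $ i > 0\<close> by (rule correlation_matrix_normalize)
  finally show ?thesis .
qed

end
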